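(* Let $V$ be a vector space over a field $F$ and $T\in OP(V)$ have a vanishing polynomial, with minimal polynomial $p_m(x)=\sum_{i=0}^m a_ix^i$. If $T$ is surjective, then $a_0\neq0$ and $T$ is bijective.
   Context: $OP(V)$ is the set of all (not necessarily linear) maps $V\to V$; $T^0=I$, $T^{i}=T\circ T^{i-1}$, and for $p(x)=\sum a_ix^i$, $p(T)(v)=\sum a_iT^i(v)$. A vanishing polynomial of $T$ is a nonzero $p\in F[x]$ with $p(T)(v)=0$ for all $v$. The minimal polynomial of $T$ is the unique monic vanishing polynomial of $T$ of least degree. *)

theory Defs
  imports Main "HOL-Computational_Algebra.Polynomial"
begin

text \<open>V is a vector space over the field F, given by a scalar multiplication
  scale satisfying the locale vector_space. Operators in OP(V) are arbitrary
  (not necessarily linear) maps V to V.\<close>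

definition poly_op :: "('f::field \<Rightarrow> 'v::ab_group_add \<Rightarrow> 'v) \<Rightarrow> 'f poly \<Rightarrow> ('v \<Rightarrow> 'v) \<Rightarrow> 'v \<Rightarrow> 'v" where
  "poly_op scale p T v = (\<Sum>i\<le>degree p. scale (coeff p i) ((T ^^ i) v))"

definition vanishing_poly :: "('f::field \<Rightarrow> 'v::ab_group_add \<Rightarrow> 'v) \<Rightarrow> ('v \<Rightarrow> 'v) \<Rightarrow> 'f poly \<Rightarrow> bool" where
  "vanishing_poly scale T p \<longleftrightarrow> p \<noteq> 0 \<and> (\<forall>v. poly_op scale p T v = 0)"

definition minimal_poly :: "('f::field \<Rightarrow> 'v::ab_group_add \<Rightarrow> 'v) \<Rightarrow> ('v \<Rightarrow> 'v) \<Rightarrow> 'f poly \<Rightarrow> bool" where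
  "minimal_poly scale T p \<longleftrightarrow> lead_coeff p = 1 \<and> vanishing_poly scale T p \<and>
     (\<forall>q. vanishing_poly scale T q \<and> lead_coeff q = 1 \<longrightarrow> degree p \<le> degree q)"

end

theory Submission
  imports Defs
begin

text \<open>Write the minimal polynomial as \<open>p = a + x q\<close>, so that \<open>a v + q(T)(T v) = 0\<close> for all \<open>v\<close>.
  If \<open>a = 0\<close> and \<open>T\<close> is surjective, then \<open>q(T)\<close> vanishes everywhere, contradicting minimality
  since \<open>q\<close> is monic of smaller degree. If \<open>a \<noteq> 0\<close>, then \<open>T u = T w\<close> gives \<open>a u = a w\<close>,
  hence \<open>u = w\<close>; no linearity of \<open>T\<close> is needed.\<close>

lemma poly_op_pCons:
  assumes vs: "vector_space scale"
  shows "poly_op scale (pCons a q) T v = scale a v + poly_op scale q T (T v)"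
proof (cases "q = 0")
  case True
  then show ?thesis
    using module.scale_zero_left[OF vs[folded module_iff_vector_space]]
    by (simp add: poly_op_def)
next
  case False
  have "poly_op scale (pCons a q) T v
      = (\<Sum>i\<le>Suc (degree q). scale (coeff (pCons a q) i) ((T ^^ i) v))"
    using False by (simp add: poly_op_def)
  also have "\<dots> = (\<Sum>i\<le>degree q. scale (coeff (pCons a q) (Suc i)) ((T ^^ Suc i) v)) + scale a v"
    by (subst sum.atMost_Suc_shift) simp
  also have "\<dots> = scale a v + poly_op scale q T (T v)"
    by (simp add: poly_op_def funpow_Suc_right del: funpow.simps)
  finally show ?thesis .
qed

lemma vanishing_poly_pCons_zero_surj:
  assumes vs: "vector_space scale"
    and van: "vanishing_poly scale T (pCons 0 q)"
    and "surj T"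
  shows "vanishing_poly scale T q"
proof -
  have "poly_op scale q T w = 0" for w
  proof -
    obtain v where "w = T v" using \<open>surj T\<close> by (metis surjD)
    then show ?thesis
      using van poly_op_pCons[OF vs, of 0 q T v]
        module.scale_zero_left[OF vs[folded module_iff_vector_space]]
      by (simp add: vanishing_poly_def)
  qed
  moreover have "q \<noteq> 0" using van by (auto simp: vanishing_poly_def)
  ultimately show ?thesis by (simp add: vanishing_poly_def)
qed

lemma minimal_poly_coeff_0_nonzero_if_surj:
  assumes vs: "vector_space scale"
    and min: "minimal_poly scale T p"
    and "surj T"
  shows "coeff p 0 \<noteq> 0"
proof
  assume a0: "coeff p 0 = 0"
  obtain q where pq: "p = pCons 0 q"
    using a0 by (cases p) auto
  have "vanishing_poly scale T q"
    using vanishing_poly_pCons_zero_surj[OF vs _ \<open>surj T\<close>] min pq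
    by (simp add: minimal_poly_def)
  moreover have "q \<noteq> 0" and "lead_coeff q = 1"
    using min pq by (auto simp: minimal_poly_def vanishing_poly_def)
  ultimately have "degree p \<le> degree q"
    using min by (simp add: minimal_poly_def)
  then show False using pq \<open>q \<noteq> 0\<close> by simp
qed

lemma inj_if_vanishing_poly_coeff_0_nonzero:
  assumes vs: "vector_space scale"
    and van: "vanishing_poly scale T p"
    and a0: "coeff p 0 \<noteq> 0"
  shows "inj T"
proof (rule injI)
  fix u w
  assume Tuw: "T u = T w"
  obtain q where pq: "p = pCons (coeff p 0) q" by (cases p) auto
  have eq: "scale (coeff p 0) v + poly_op scale q T (T v) = 0" for v
    using van poly_op_pCons[OF vs] pq by (metis vanishing_poly_def)
  have "scale (coeff p 0) u = scale (coeff p 0) w"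
    using eq[of u] eq[of w] Tuw by (metis add_right_cancel)
  then have "scale (inverse (coeff p 0)) (scale (coeff p 0) u)
           = scale (inverse (coeff p 0)) (scale (coeff p 0) w)"
    by simp
  then show "u = w"
    using a0 module.scale_scale[OF vs[folded module_iff_vector_space]]
      module.scale_one[OF vs[folded module_iff_vector_space]]
    by simp
qed

theorem mainTheorem14:
  fixes scale :: "'f::field \<Rightarrow> 'v::ab_group_add \<Rightarrow> 'v"
    and T :: "'v \<Rightarrow> 'v" and p :: "'f poly"
  assumes "vector_space scale"
    and "\<exists>q. vanishing_poly scale T q"
    and "minimal_poly scale T p"
    and "surj T"
  shows "coeff p 0 \<noteq> 0 \<and> bij T"
proof -
  have a0: "coeff p 0 \<noteq> 0"
    using minimal_poly_coeff_0_nonzero_if_surj assms(1,3,4) .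
  have "vanishing_poly scale T p"
    using assms(3) by (simp add: minimal_poly_def)
  then have "inj T"
    using inj_if_vanishing_poly_coeff_0_nonzero assms(1) a0 by blast
  then show ?thesis
    using a0 \<open>surj T\<close> by (simp add: bij_def)
qed

end
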